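(* Let $f:\mathbb{R}^n\to\mathbb{R}\cup\{+\infty\}$ be a polyhedral M-convex function with bounded $\operatorname{dom}_{\mathbb{R}} f$. Let $y\in\operatorname{dom}_{\mathbb{R}} f$ with $\phi_{\mathbb{R}}(y)<0$, let $i,j\in N$ be distinct with $f'_{\mathbb{R}}(y;i,j)=\phi_{\mathbb{R}}(y)$, and let $\lambda>0$ satisfy $f(y+\lambda(\chi_i-\chi_j))-f(y)=\lambda\phi_{\mathbb{R}}(y)$. Put $\hat y=y+\lambda(\chi_i-\chi_j)$. Then (i) $\phi_{\mathbb{R}}(\hat y)\ge\phi_{\mathbb{R}}(y)$; (ii) for all distinct $h,k\in N$, $f'_{\mathbb{R}}(\hat y;h,k)\ge\phi_{\mathbb{R}}(y)$, and if equality holds then $f'_{\mathbb{R}}(\hat y;h,k)=\phi_{\mathbb{R}}(\hat y)$ (i.e. $+\chi_h-\chi_k$ is a steepest descent direction at $\hat y$), $k\neq i$, and $h\neq j$.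
   Context: $N=\{1,\dots,n\}$; $\chi_i$ is the $i$-th unit vector. $\operatorname{dom}_{\mathbb{R}} f=\{x\in\mathbb{R}^n:f(x)<+\infty\}$. A polyhedral convex function $f:\mathbb{R}^n\to\mathbb{R}\cup\{+\infty\}$ (epigraph a polyhedron, $\operatorname{dom}_{\mathbb{R}} f\neq\emptyset$) is M-convex if for all $x,y\in\operatorname{dom}_{\mathbb{R}} f$ and every $i$ with $x(i)>y(i)$ there exist $j$ with $x(j)<y(j)$ and $\epsilon_0>0$ such that $f(x)+f(y)\ge f(x-\epsilon(\chi_i-\chi_j))+f(y+\epsilon(\chi_i-\chi_j))$ for all $\epsilon\in[0,\epsilon_0]$. For $x\in\operatorname{dom}_{\mathbb{R}} f$, $f'_{\mathbb{R}}(x;i,j)=\lim_{\alpha\downarrow0}(f(x+\alpha(\chi_i-\chi_j))-f(x))/\alpha$ (possibly $+\infty$), and $\phi_{\mathbb{R}}(x)=\min_{i,j\in N}f'_{\mathbb{R}}(x;i,j)$. *)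

theory Defs
  imports "HOL-Analysis.Analysis"
begin

text \<open>Functions R^n -> R \<union> {+\<infinity>} are modelled as f :: real^'n \<Rightarrow> ereal that never take
  the value -\<infinity>; the ground set N is the finite index type 'n.\<close>

definition chi :: "'n::finite \<Rightarrow> real^'n" where
  "chi i = axis i 1"

definition edom :: "(real^'n::finite \<Rightarrow> ereal) \<Rightarrow> (real^'n) set" where
  "edom f = {x. f x < \<infinity>}"

definition epigraph :: "(real^'n::finite \<Rightarrow> ereal) \<Rightarrow> ((real^'n) \<times> real) set" where
  "epigraph f = {(x, t). f x \<le> ereal t}"

definition polyhedral_convex :: "(real^'n::finite \<Rightarrow> ereal) \<Rightarrow> bool" where
  "polyhedral_convex f \<longleftrightarrow> (\<forall>x. f x \<noteq> -\<infinity>) \<and> polyhedron (epigraph f) \<and> edom f \<noteq> {}"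

definition M_convex :: "(real^'n::finite \<Rightarrow> ereal) \<Rightarrow> bool" where
  "M_convex f \<longleftrightarrow> polyhedral_convex f \<and>
     (\<forall>x\<in>edom f. \<forall>y\<in>edom f. \<forall>i. x $ i > y $ i \<longrightarrow>
        (\<exists>j. x $ j < y $ j \<and> (\<exists>\<epsilon>0>0. \<forall>\<epsilon>\<in>{0..\<epsilon>0}.
           f x + f y \<ge> f (x - \<epsilon> *\<^sub>R (chi i - chi j)) + f (y + \<epsilon> *\<^sub>R (chi i - chi j)))))"

definition dir_deriv :: "(real^'n::finite \<Rightarrow> ereal) \<Rightarrow> real^'n \<Rightarrow> 'n \<Rightarrow> 'n \<Rightarrow> ereal" where
  "dir_deriv f x i j =
     Lim (at_right (0::real)) (\<lambda>\<alpha>. (f (x + \<alpha> *\<^sub>R (chi i - chi j)) - f x) / ereal \<alpha>)"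

definition phi :: "(real^'n::finite \<Rightarrow> ereal) \<Rightarrow> real^'n \<Rightarrow> ereal" where
  "phi f x = Min {dir_deriv f x i j | i j. True}"

end

(* Let p = phi f y < 0 and y' = y + lam (chi i - chi j). Every directional derivative at y is at
   least p, and the exchange property upgrades this local bound to the global minorant
   f x >= f y + p * |(x - y)^+|_1: the violators form a compact set (the domain is bounded), and
   exchanging a violator nearest to y (in l1 distance) with y yields a violator nearer to y.
   At y' + eps (chi h - chi k) with 0 < eps <= lam the positive part of the displacement from y
   has l1 norm at most lam + eps, and at most lam if k = i or h = j. Since f y' = f y + lam p,
   this gives f'(y'; h, k) >= p, and even f'(y'; h, k) >= 0 > p in the latter case. *)

theory Submission imports Defs begin

lemma chi_nth: "chi i $ a = (if a = i then 1 else 0)"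
  by (simp add: chi_def axis_def)

lemma polyhedral_convex_not_MInf: "polyhedral_convex f \<Longrightarrow> f x \<noteq> -\<infinity>"
  unfolding polyhedral_convex_def by blast

lemma polyhedral_convex_edomE:
  assumes "polyhedral_convex f" and "x \<in> edom f"
  obtains r where "f x = ereal r"
  using assms polyhedral_convex_not_MInf[of f x] by (cases "f x") (auto simp: edom_def)

lemma polyhedral_convex_convex_combination:
  assumes pc: "polyhedral_convex f" and fx: "f x = ereal a" and fz: "f z = ereal b"
    and t: "0 \<le> t" "t \<le> 1"
  shows "f ((1 - t) *\<^sub>R x + t *\<^sub>R z) \<le> ereal ((1 - t) * a + t * b)"
proof -
  have "convex (epigraph f)"
    using pc polyhedron_imp_convex unfolding polyhedral_convex_def by blast
  moreover have "(x, a) \<in> epigraph f" "(z, b) \<in> epigraph f"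
    using fx fz by (auto simp: epigraph_def)
  ultimately have "(1 - t) *\<^sub>R (x, a) + t *\<^sub>R (z, b) \<in> epigraph f"
    using t by (intro convexD) auto
  then show ?thesis by (simp add: epigraph_def)
qed

lemma difference_quotient_mono:
  assumes pc: "polyhedral_convex f" and fx: "f x = ereal r" and "0 < \<alpha>" "\<alpha> \<le> \<beta>"
  shows "(f (x + \<alpha> *\<^sub>R v) - f x) / ereal \<alpha> \<le> (f (x + \<beta> *\<^sub>R v) - f x) / ereal \<beta>"
proof (cases "f (x + \<beta> *\<^sub>R v)")
  case PInf
  then show ?thesis using \<open>0 < \<alpha>\<close> \<open>\<alpha> \<le> \<beta>\<close> fx by (simp add: ereal_divide_ereal)
next
  case MInf
  then show ?thesis using polyhedral_convex_not_MInf[OF pc] by blast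
next
  case (real s)
  define t where "t = \<alpha> / \<beta>"
  have t: "0 \<le> t" "t \<le> 1" using \<open>0 < \<alpha>\<close> \<open>\<alpha> \<le> \<beta>\<close> by (auto simp: t_def)
  have "(1 - t) *\<^sub>R x + t *\<^sub>R (x + \<beta> *\<^sub>R v) = x + \<alpha> *\<^sub>R v"
    using \<open>0 < \<alpha>\<close> \<open>\<alpha> \<le> \<beta>\<close> by (simp add: t_def algebra_simps)
  then have le: "f (x + \<alpha> *\<^sub>R v) \<le> ereal ((1 - t) * r + t * s)"
    using polyhedral_convex_convex_combination[OF pc fx real t] by simp
  then obtain u where fu: "f (x + \<alpha> *\<^sub>R v) = ereal u"
    using polyhedral_convex_not_MInf[OF pc] by (cases "f (x + \<alpha> *\<^sub>R v)") auto
  have "(1 - t) * r + t * s = r + \<alpha> * ((s - r) / \<beta>)"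
    using \<open>0 < \<alpha>\<close> \<open>\<alpha> \<le> \<beta>\<close> by (simp add: t_def field_simps)
  then have "(u - r) / \<alpha> \<le> (s - r) / \<beta>"
    using le fu \<open>0 < \<alpha>\<close> by (simp add: pos_divide_le_eq mult.commute)
  then show ?thesis using fu real fx \<open>0 < \<alpha>\<close> \<open>\<alpha> \<le> \<beta>\<close> by (simp add: ereal_divide)
qed

lemma difference_quotient_tendsto_INF:
  assumes pc: "polyhedral_convex f" and fx: "f x = ereal r"
  shows "((\<lambda>\<alpha>. (f (x + \<alpha> *\<^sub>R v) - f x) / ereal \<alpha>) \<longlongrightarrow>
           (INF \<alpha>\<in>{0<..}. (f (x + \<alpha> *\<^sub>R v) - f x) / ereal \<alpha>)) (at_right 0)"
    (is "(?Q \<longlongrightarrow> ?L) _")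
proof (rule order_tendstoI)
  fix a assume "a < ?L"
  then show "eventually (\<lambda>\<alpha>. a < ?Q \<alpha>) (at_right 0)"
    unfolding eventually_at_right_field
    by (intro exI[of _ 1]) (auto intro: less_le_trans INF_lower)
next
  fix a assume "?L < a"
  then obtain \<beta> where "\<beta> > 0" "?Q \<beta> < a" by (auto simp: INF_less_iff)
  then show "eventually (\<lambda>\<alpha>. ?Q \<alpha> < a) (at_right 0)"
    unfolding eventually_at_right_field
    by (intro exI[of _ \<beta>])
      (auto intro: le_less_trans[OF difference_quotient_mono[OF pc fx, of _ \<beta>]])
qed

lemma dir_deriv_eq_INF:
  assumes "polyhedral_convex f" and "f x = ereal r"
  shows "dir_deriv f x a b = (INF \<alpha>\<in>{0<..}. (f (x + \<alpha> *\<^sub>R (chi a - chi b)) - f x) / ereal \<alpha>)"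
  unfolding dir_deriv_def
  by (rule tendsto_Lim[OF _ difference_quotient_tendsto_INF[OF assms]]) simp

lemma dir_deriv_lower_boundD:
  assumes pc: "polyhedral_convex f" and fx: "f x = ereal r"
    and q: "ereal q \<le> dir_deriv f x a b" and "0 < \<epsilon>"
  shows "f x + ereal (\<epsilon> * q) \<le> f (x + \<epsilon> *\<^sub>R (chi a - chi b))"
proof (cases "f (x + \<epsilon> *\<^sub>R (chi a - chi b))")
  case (real c)
  have "ereal q \<le> (f (x + \<epsilon> *\<^sub>R (chi a - chi b)) - f x) / ereal \<epsilon>"
    using q \<open>0 < \<epsilon>\<close> unfolding dir_deriv_eq_INF[OF pc fx] by (blast intro: INF_lower order_trans)
  then have "q \<le> (c - r) / \<epsilon>" using real fx \<open>0 < \<epsilon>\<close> by (simp add: ereal_divide)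
  then show ?thesis using real fx \<open>0 < \<epsilon>\<close> by (simp add: pos_le_divide_eq mult.commute)
qed (use fx polyhedral_convex_not_MInf[OF pc] in auto)

lemma dir_deriv_lower_bound:
  assumes pc: "polyhedral_convex f" and fx: "f x = ereal r" and "0 < lam"
    and near: "\<And>\<epsilon>. 0 < \<epsilon> \<Longrightarrow> \<epsilon> \<le> lam \<Longrightarrow>
                 f x + ereal (\<epsilon> * q) \<le> f (x + \<epsilon> *\<^sub>R (chi a - chi b))"
  shows "ereal q \<le> dir_deriv f x a b"
  unfolding dir_deriv_eq_INF[OF pc fx]
proof (rule INF_greatest)
  fix \<alpha> :: real assume "\<alpha> \<in> {0<..}"
  define \<epsilon> where "\<epsilon> = min \<alpha> lam"
  have \<epsilon>: "0 < \<epsilon>" "\<epsilon> \<le> lam" "\<epsilon> \<le> \<alpha>" using \<open>\<alpha> \<in> {0<..}\<close> \<open>0 < lam\<close> by (auto simp: \<epsilon>_def)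
  have "ereal q \<le> (f (x + \<epsilon> *\<^sub>R (chi a - chi b)) - f x) / ereal \<epsilon>"
  proof (cases "f (x + \<epsilon> *\<^sub>R (chi a - chi b))")
    case (real c)
    then have "r + \<epsilon> * q \<le> c" using near[OF \<epsilon>(1,2)] fx by simp
    then show ?thesis using real fx \<epsilon> by (simp add: ereal_divide pos_le_divide_eq mult.commute)
  qed (use fx \<epsilon> polyhedral_convex_not_MInf[OF pc] in \<open>auto simp: ereal_divide_ereal\<close>)
  also have "\<dots> \<le> (f (x + \<alpha> *\<^sub>R (chi a - chi b)) - f x) / ereal \<alpha>"
    using difference_quotient_mono[OF pc fx \<epsilon>(1,3)] .
  finally show "ereal q \<le> (f (x + \<alpha> *\<^sub>R (chi a - chi b)) - f x) / ereal \<alpha>" .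
qed

lemma dir_deriv_self:
  assumes "polyhedral_convex f" and "f x = ereal r"
  shows "dir_deriv f x a a = 0"
  using assms by (simp add: dir_deriv_eq_INF zero_ereal_def)

lemma finite_dir_derivs: "finite {dir_deriv f x a b | a b. True}"
  by (rule finite_subset[of _ "(\<lambda>(a, b). dir_deriv f x a b) ` UNIV"]) auto

lemma phi_le_dir_deriv: "phi f x \<le> dir_deriv f x a b"
  unfolding phi_def by (rule Min_le[OF finite_dir_derivs]) blast

lemma phi_attained:
  obtains a b where "phi f x = dir_deriv f x a b"
proof -
  have "phi f x \<in> {dir_deriv f x a b | a b. True}"
    unfolding phi_def by (rule Min_in[OF finite_dir_derivs]) auto
  then show ?thesis using that by blast
qed

definition excess :: "real^'n::finite \<Rightarrow> real^'n \<Rightarrow> real" where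
  "excess y x = (\<Sum>a\<in>UNIV. max (x $ a - y $ a) 0)"

definition l1_dist :: "real^'n::finite \<Rightarrow> real^'n \<Rightarrow> real" where
  "l1_dist y x = (\<Sum>a\<in>UNIV. \<bar>x $ a - y $ a\<bar>)"

lemma excess_self [simp]: "excess y y = 0"
  by (simp add: excess_def)

lemma continuous_on_excess: "continuous_on A (excess y)"
  unfolding excess_def by (intro continuous_intros)

lemma continuous_on_l1_dist: "continuous_on A (l1_dist y)"
  unfolding l1_dist_def by (intro continuous_intros)

lemma
  assumes "a \<noteq> b" "0 < e" "e \<le> x $ a - y $ a" "e \<le> y $ b - x $ b"
  shows excess_exchange: "excess y (x - e *\<^sub>R (chi a - chi b)) = excess y x - e"
    and l1_dist_exchange: "l1_dist y (x - e *\<^sub>R (chi a - chi b)) = l1_dist y x - 2 * e"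
proof -
  have "max ((x - e *\<^sub>R (chi a - chi b)) $ c - y $ c) 0 = max (x $ c - y $ c) 0 - (if c = a then e else 0)" for c
    using assms by (auto simp: chi_nth)
  then show "excess y (x - e *\<^sub>R (chi a - chi b)) = excess y x - e"
    by (simp add: excess_def sum_subtractf)
  have "\<bar>(x - e *\<^sub>R (chi a - chi b)) $ c - y $ c\<bar> =
      \<bar>x $ c - y $ c\<bar> - (if c = a then e else 0) - (if c = b then e else 0)" for c
    using assms by (auto simp: chi_nth)
  then show "l1_dist y (x - e *\<^sub>R (chi a - chi b)) = l1_dist y x - 2 * e"
    by (simp add: l1_dist_def sum_subtractf)
qed

lemma M_convex_exchange_towards:
  assumes M: "M_convex f" and "x \<in> edom f" "y \<in> edom f" "x \<noteq> y"
  obtains a b e where "a \<noteq> b" "0 < e" "e \<le> x $ a - y $ a" "e \<le> y $ b - x $ b"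
    "f (x - e *\<^sub>R (chi a - chi b)) + f (y + e *\<^sub>R (chi a - chi b)) \<le> f x + f y"
proof -
  have exchange: "\<exists>b. u $ b < w $ b \<and> (\<exists>\<epsilon>0>0. \<forall>\<epsilon>\<in>{0..\<epsilon>0}.
      f u + f w \<ge> f (u - \<epsilon> *\<^sub>R (chi a - chi b)) + f (w + \<epsilon> *\<^sub>R (chi a - chi b)))"
    if "u \<in> edom f" "w \<in> edom f" "u $ a > w $ a" for u w a
    using M that unfolding M_convex_def by blast
  obtain i where "x $ i \<noteq> y $ i" using \<open>x \<noteq> y\<close> by (auto simp: vec_eq_iff)
  then consider "x $ i > y $ i" | "y $ i > x $ i" by linarith
  then show ?thesis
  proof cases
    case 1
    then obtain j \<epsilon>0 where j: "x $ j < y $ j" "\<epsilon>0 > 0" and ex: "\<forall>\<epsilon>\<in>{0..\<epsilon>0}.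
        f x + f y \<ge> f (x - \<epsilon> *\<^sub>R (chi i - chi j)) + f (y + \<epsilon> *\<^sub>R (chi i - chi j))"
      using exchange[OF \<open>x \<in> edom f\<close> \<open>y \<in> edom f\<close>] by blast
    define e where "e = min \<epsilon>0 (min (x $ i - y $ i) (y $ j - x $ j))"
    show ?thesis
      by (rule that[of i j e]) (use 1 j ex in \<open>auto simp: e_def\<close>)
  next
    case 2
    then obtain j \<epsilon>0 where j: "y $ j < x $ j" "\<epsilon>0 > 0" and ex: "\<forall>\<epsilon>\<in>{0..\<epsilon>0}.
        f y + f x \<ge> f (y - \<epsilon> *\<^sub>R (chi i - chi j)) + f (x + \<epsilon> *\<^sub>R (chi i - chi j))"
      using exchange[OF \<open>y \<in> edom f\<close> \<open>x \<in> edom f\<close>] by blast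
    define e where "e = min \<epsilon>0 (min (y $ i - x $ i) (x $ j - y $ j))"
    have "x - e *\<^sub>R (chi j - chi i) = x + e *\<^sub>R (chi i - chi j)"
      "y + e *\<^sub>R (chi j - chi i) = y - e *\<^sub>R (chi i - chi j)"
      by (simp_all add: algebra_simps)
    then show ?thesis
      by (intro that[of j i e]) (use 2 j ex in \<open>auto simp: e_def add.commute\<close>)
  qed
qed

lemma M_convex_excess_lower_bound:
  assumes M: "M_convex f" and bd: "bounded (edom f)" and "y \<in> edom f"
    and "p \<le> 0" and p: "ereal p \<le> phi f y"
  shows "f y + ereal (p * excess y x) \<le> f x"
proof (rule ccontr)
  have pc: "polyhedral_convex f" using M unfolding M_convex_def by blast
  obtain r where fy: "f y = ereal r" using polyhedral_convex_edomE[OF pc \<open>y \<in> edom f\<close>] .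
  have near_y: "f y + ereal (\<epsilon> * p) \<le> f (y + \<epsilon> *\<^sub>R (chi a - chi b))" if "0 < \<epsilon>" for a b \<epsilon>
    using dir_deriv_lower_boundD[OF pc fy order_trans[OF p phi_le_dir_deriv] that] .
  assume "\<not> f y + ereal (p * excess y x) \<le> f x"
  then obtain v where fx: "f x = ereal v" and "v < r + p * excess y x"
    using polyhedral_convex_not_MInf[OF pc, of x] fy by (cases "f x") auto
  define c where "c = v - p * excess y x"
  define T where "T = {z. (z, c + p * excess y z) \<in> epigraph f}"
  have "closed (epigraph f)"
    using pc polyhedron_imp_closed unfolding polyhedral_convex_def by blast
  moreover have "continuous_on UNIV (\<lambda>z. (z, c + p * excess y z))"
    by (intro continuous_intros continuous_on_excess)
  ultimately have "closed T"
    unfolding T_def using closed_vimage by (simp add: vimage_def)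
  moreover have "T \<subseteq> edom f" by (auto simp: T_def epigraph_def edom_def)
  ultimately have "compact T"
    using bounded_subset[OF bd] by (simp add: compact_eq_bounded_closed)
  moreover have "x \<in> T" using fx by (simp add: T_def epigraph_def c_def)
  ultimately obtain z where "z \<in> T" and z_nearest: "\<And>u. u \<in> T \<Longrightarrow> l1_dist y z \<le> l1_dist y u"
    using continuous_attains_inf[of T "l1_dist y"] continuous_on_l1_dist by blast
  then obtain w where fz: "f z = ereal w" and w: "w \<le> c + p * excess y z"
    using polyhedral_convex_not_MInf[OF pc, of z] by (cases "f z") (auto simp: T_def epigraph_def)
  have "z \<noteq> y" using fz fy w \<open>v < r + p * excess y x\<close> by (auto simp: c_def)
  moreover have "z \<in> edom f" using fz by (simp add: edom_def)
  ultimately obtain a b e where ab: "a \<noteq> b" "0 < e" "e \<le> z $ a - y $ a" "e \<le> y $ b - z $ b"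
    and exch: "f (z - e *\<^sub>R (chi a - chi b)) + f (y + e *\<^sub>R (chi a - chi b)) \<le> f z + f y"
    using M_convex_exchange_towards[OF M _ \<open>y \<in> edom f\<close>] by blast
  define u where "u = z - e *\<^sub>R (chi a - chi b)"
  have "f u \<le> ereal (w - e * p)"
    using exch near_y[OF \<open>0 < e\<close>, of a b] fz fy polyhedral_convex_not_MInf[OF pc]
    unfolding u_def
    by (cases "f (z - e *\<^sub>R (chi a - chi b))"; cases "f (y + e *\<^sub>R (chi a - chi b))") auto
  also have "w - e * p \<le> c + p * excess y u"
    using w excess_exchange[OF ab] unfolding u_def by (simp add: right_diff_distrib)
  finally have "u \<in> T" by (simp add: T_def epigraph_def)
  then show False
    using z_nearest l1_dist_exchange[OF ab] \<open>0 < e\<close> by (fastforce simp: u_def)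
qed

lemma excess_two_moves:
  assumes "h \<noteq> k" "0 < \<epsilon>" "\<epsilon> \<le> lam"
  shows "excess y (y + lam *\<^sub>R (chi i - chi j) + \<epsilon> *\<^sub>R (chi h - chi k))
           \<le> (if k = i \<or> h = j then lam else lam + \<epsilon>)"
proof -
  define g where "g a = (if a = i then lam - (if k = i then \<epsilon> else 0) else 0)
                        + (if a = h \<and> h \<noteq> j then \<epsilon> else 0)" for a
  have "excess y (y + lam *\<^sub>R (chi i - chi j) + \<epsilon> *\<^sub>R (chi h - chi k)) \<le> sum g UNIV"
    unfolding excess_def using assms
    by (intro sum_mono) (auto simp: g_def chi_nth)
  also have "sum g UNIV = lam - (if k = i then \<epsilon> else 0) + (if h \<noteq> j then \<epsilon> else 0)"
    by (simp add: g_def sum.distrib)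
  also have "\<dots> \<le> (if k = i \<or> h = j then lam else lam + \<epsilon>)"
    using assms by auto
  finally show ?thesis .
qed

lemma M_convex_dir_deriv_after_step:
  assumes M: "M_convex f" and "bounded (edom f)" and "y \<in> edom f"
    and "p \<le> 0" and "ereal p \<le> phi f y" and "0 < lam"
    and step: "f (y + lam *\<^sub>R (chi i - chi j)) = f y + ereal (lam * p)" and "h \<noteq> k"
  shows "ereal (if k = i \<or> h = j then 0 else p) \<le> dir_deriv f (y + lam *\<^sub>R (chi i - chi j)) h k"
proof -
  have pc: "polyhedral_convex f" using M unfolding M_convex_def by blast
  obtain r where fy: "f y = ereal r" using polyhedral_convex_edomE[OF pc \<open>y \<in> edom f\<close>] .
  define y' where "y' = y + lam *\<^sub>R (chi i - chi j)"
  have fy': "f y' = ereal (r + lam * p)" using step fy by (simp add: y'_def)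
  show ?thesis unfolding y'_def[symmetric]
  proof (rule dir_deriv_lower_bound[OF pc fy' \<open>0 < lam\<close>])
    fix \<epsilon> :: real assume \<epsilon>: "0 < \<epsilon>" "\<epsilon> \<le> lam"
    have "p * (if k = i \<or> h = j then lam else lam + \<epsilon>) \<le> p * excess y (y' + \<epsilon> *\<^sub>R (chi h - chi k))"
      unfolding y'_def using excess_two_moves[OF \<open>h \<noteq> k\<close> \<epsilon>] \<open>p \<le> 0\<close>
      by (rule mult_left_mono_neg)
    then have "f y' + ereal (\<epsilon> * (if k = i \<or> h = j then 0 else p))
                 \<le> f y + ereal (p * excess y (y' + \<epsilon> *\<^sub>R (chi h - chi k)))"
      using fy fy' by (auto simp: algebra_simps)
    also have "\<dots> \<le> f (y' + \<epsilon> *\<^sub>R (chi h - chi k))"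
      using M_convex_excess_lower_bound[OF assms(1-5)] .
    finally show "f y' + ereal (\<epsilon> * (if k = i \<or> h = j then 0 else p))
                    \<le> f (y' + \<epsilon> *\<^sub>R (chi h - chi k))" .
  qed
qed

theorem mainTheorem14:
  fixes f :: "real^'n::finite \<Rightarrow> ereal" and y :: "real^'n" and i j :: 'n and lam :: real
  assumes "M_convex f"
    and "bounded (edom f)"
    and "y \<in> edom f"
    and "phi f y < 0"
    and "i \<noteq> j"
    and "dir_deriv f y i j = phi f y"
    and "lam > 0"
    and "f (y + lam *\<^sub>R (chi i - chi j)) - f y = ereal lam * phi f y"
  shows "phi f (y + lam *\<^sub>R (chi i - chi j)) \<ge> phi f y \<and>
         (\<forall>h k. h \<noteq> k \<longrightarrow>
           dir_deriv f (y + lam *\<^sub>R (chi i - chi j)) h k \<ge> phi f y \<and>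
           (dir_deriv f (y + lam *\<^sub>R (chi i - chi j)) h k = phi f y \<longrightarrow>
              dir_deriv f (y + lam *\<^sub>R (chi i - chi j)) h k = phi f (y + lam *\<^sub>R (chi i - chi j))
              \<and> k \<noteq> i \<and> h \<noteq> j))"
proof -
  define y' where "y' = y + lam *\<^sub>R (chi i - chi j)"
  have pc: "polyhedral_convex f" using assms(1) unfolding M_convex_def by blast
  obtain r where fy: "f y = ereal r" using polyhedral_convex_edomE[OF pc assms(3)] .
  have "f y' \<noteq> -\<infinity>" using polyhedral_convex_not_MInf[OF pc] .
  then obtain p where p: "phi f y = ereal p" "p < 0"
    using assms(4,7,8) fy unfolding y'_def[symmetric] by (cases "phi f y"; cases "f y'") auto
  have step: "f y' = f y + ereal (lam * p)"
    using assms(8) fy p unfolding y'_def[symmetric] by (cases "f y'") auto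
  have after_step: "ereal (if k = i \<or> h = j then 0 else p) \<le> dir_deriv f y' h k" if "h \<noteq> k" for h k
    using M_convex_dir_deriv_after_step[OF assms(1-3) _ _ assms(7) step[unfolded y'_def] that] p
    unfolding y'_def by simp
  have dir_deriv_ge: "ereal p \<le> dir_deriv f y' h k" for h k
  proof (cases "h = k")
    case True
    then show ?thesis using dir_deriv_self[OF pc] step fy p by (simp add: zero_ereal_def)
  next
    case False
    have "ereal p \<le> ereal (if k = i \<or> h = j then 0 else p)" using p(2) by simp
    then show ?thesis using after_step[OF False] by (rule order_trans)
  qed
  then have phi_ge: "ereal p \<le> phi f y'" by (metis phi_attained)
  show ?thesis unfolding y'_def[symmetric] p(1)
  proof (intro conjI allI impI phi_ge dir_deriv_ge)
    fix h k assume "h \<noteq> k" and eq: "dir_deriv f y' h k = ereal p"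
    show "dir_deriv f y' h k = phi f y'" using eq phi_ge phi_le_dir_deriv[of f y' h k] by simp
    show "k \<noteq> i" "h \<noteq> j" using after_step[OF \<open>h \<noteq> k\<close>] eq p(2) by auto
  qed
qed

end
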